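(* Let $\mathsf{C}$ be a (strict) 2-category, let $\Delta:\mathsf{C}\to\mathsf{Cat}$ be a (strict) 2-functor, and let $\mathrm{W}$ be a Lawvere weight on $\mathsf{C}$. Then the 2-functor interleaving distance $d_{\Delta,\mathrm{W}}$ is an extended pseudometric on $\mathrm{Im}(\Delta)$ (i.e. it takes values in $[0,\infty]$, vanishes on the diagonal, is symmetric, and satisfies the triangle inequality).
   Context: $\mathsf{Cat}$ is the 2-category of small categories, functors and natural transformations. Composition of 1-morphisms is written $gf=g\circ f$. For $A\in\mathsf C_0$, $\Delta(A)$ is a small category; for $f:A\to B$, $\Delta_f:\Delta(A)\to\Delta(B)$ is a functor; for a 2-morphism $\alpha:f\Rightarrow g$, $\Delta(\alpha):\Delta_f\Rightarrow\Delta_g$ is a natural transformation with components $\Delta(\alpha)_X$; $\Delta$ preserves identities and vertical and horizontal composition. $\mathrm{Im}(\Delta)=\bigcup_{A\in\mathsf C_0}\Delta(A)_0$. A Lawvere weight on $\mathsf{C}$ is a function $\mathrm{W}$ from 1-morphisms to $\mathbb{R}\cup\{\infty\}$ with $\mathrm{W}(g)\ge0$, $\mathrm{W}(1_A)=0$, and $\mathrm{W}(gf)\le\mathrm{W}(g)+\mathrm{W}(f)$ for composable $f,g$. For $X\in\Delta(A)_0$, $Y\in\Delta(B)_0$, $g\in\mathsf C_1(B,A)$, $h\in\mathsf C_1(A,B)$, $X$ and $Y$ are $(g,h)$-interleaved if there exist morphisms $\phi:X\to\Delta_g(Y)$ in $\Delta(A)$, $\psi:Y\to\Delta_h(X)$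 in $\Delta(B)$ and 2-morphisms $\alpha:1_A\Rightarrow gh$, $\beta:1_B\Rightarrow hg$ with $\Delta_g(\psi)\circ\phi=\Delta(\alpha)_X$ and $\Delta_h(\phi)\circ\psi=\Delta(\beta)_Y$. Then $d_{\Delta,\mathrm{W}}(X,Y)=\inf\{\max\{\mathrm{W}(g),\mathrm{W}(h)\}:X,Y\ (g,h)\text{-interleaved}\}$, with $\inf\emptyset=\infty$. *)

theory Defs
  imports "HOL-Library.Extended_Real"
begin

text \<open>A strict 2-category with objects of type 'o, 1-morphisms of type 'm and
2-morphisms of type 't.  comp1 g f is g composed after f (written gf);
vcomp b a is vertical composition (a first); hcomp b a is horizontal composition
of a : f => g (A -> B) and b : h => k (B -> C), giving hf => kg.\<close>

record ('o,'m,'t) two_cat =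
  Ob    :: "'o set"
  Mor   :: "'m set"
  dom1  :: "'m \<Rightarrow> 'o"
  cod1  :: "'m \<Rightarrow> 'o"
  id1   :: "'o \<Rightarrow> 'm"
  comp1 :: "'m \<Rightarrow> 'm \<Rightarrow> 'm"
  Cell  :: "'t set"
  src2  :: "'t \<Rightarrow> 'm"
  tgt2  :: "'t \<Rightarrow> 'm"
  id2   :: "'m \<Rightarrow> 't"
  vcomp :: "'t \<Rightarrow> 't \<Rightarrow> 't"
  hcomp :: "'t \<Rightarrow> 't \<Rightarrow> 't"

definition hom1 :: "('o,'m,'t) two_cat \<Rightarrow> 'o \<Rightarrow> 'o \<Rightarrow> 'm set" where
  "hom1 C A B = {f \<in> Mor C. dom1 C f = A \<and> cod1 C f = B}"

definition cell2 :: "('o,'m,'t) two_cat \<Rightarrow> 'm \<Rightarrow> 'm \<Rightarrow> 't set" where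
  "cell2 C f g = {\<alpha> \<in> Cell C. src2 C \<alpha> = f \<and> tgt2 C \<alpha> = g}"

definition strict_two_category :: "('o,'m,'t) two_cat \<Rightarrow> bool" where
  "strict_two_category C \<longleftrightarrow>
    \<comment> \<open>underlying 1-category\<close>
    (\<forall>f \<in> Mor C. dom1 C f \<in> Ob C \<and> cod1 C f \<in> Ob C) \<and>
    (\<forall>A \<in> Ob C. id1 C A \<in> hom1 C A A) \<and>
    (\<forall>A \<in> Ob C. \<forall>B \<in> Ob C. \<forall>D \<in> Ob C. \<forall>f \<in> hom1 C A B. \<forall>g \<in> hom1 C B D.
        comp1 C g f \<in> hom1 C A D) \<and>
    (\<forall>f \<in> Mor C. comp1 C f (id1 C (dom1 C f)) = f \<and> comp1 C (id1 C (cod1 C f)) f = f) \<and>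
    (\<forall>f \<in> Mor C. \<forall>g \<in> Mor C. \<forall>h \<in> Mor C. cod1 C f = dom1 C g \<longrightarrow> cod1 C g = dom1 C h \<longrightarrow>
        comp1 C h (comp1 C g f) = comp1 C (comp1 C h g) f) \<and>
    \<comment> \<open>2-cells go between parallel 1-morphisms\<close>
    (\<forall>\<alpha> \<in> Cell C. src2 C \<alpha> \<in> Mor C \<and> tgt2 C \<alpha> \<in> Mor C \<and>
        dom1 C (src2 C \<alpha>) = dom1 C (tgt2 C \<alpha>) \<and> cod1 C (src2 C \<alpha>) = cod1 C (tgt2 C \<alpha>)) \<and>
    \<comment> \<open>vertical composition: each hom is a category\<close>
    (\<forall>f \<in> Mor C. id2 C f \<in> cell2 C f f) \<and>
    (\<forall>\<alpha> \<in> Cell C. \<forall>\<beta> \<in> Cell C. tgt2 C \<alpha> = src2 C \<beta> \<longrightarrow>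
        vcomp C \<beta> \<alpha> \<in> cell2 C (src2 C \<alpha>) (tgt2 C \<beta>)) \<and>
    (\<forall>\<alpha> \<in> Cell C. vcomp C \<alpha> (id2 C (src2 C \<alpha>)) = \<alpha> \<and> vcomp C (id2 C (tgt2 C \<alpha>)) \<alpha> = \<alpha>) \<and>
    (\<forall>\<alpha> \<in> Cell C. \<forall>\<beta> \<in> Cell C. \<forall>\<gamma> \<in> Cell C. tgt2 C \<alpha> = src2 C \<beta> \<longrightarrow> tgt2 C \<beta> = src2 C \<gamma> \<longrightarrow>
        vcomp C \<gamma> (vcomp C \<beta> \<alpha>) = vcomp C (vcomp C \<gamma> \<beta>) \<alpha>) \<and>
    \<comment> \<open>horizontal composition\<close>
    (\<forall>\<alpha> \<in> Cell C. \<forall>\<beta> \<in> Cell C. cod1 C (src2 C \<alpha>) = dom1 C (src2 C \<beta>) \<longrightarrow>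
        hcomp C \<beta> \<alpha> \<in> cell2 C (comp1 C (src2 C \<beta>) (src2 C \<alpha>)) (comp1 C (tgt2 C \<beta>) (tgt2 C \<alpha>))) \<and>
    (\<forall>\<alpha> \<in> Cell C. hcomp C \<alpha> (id2 C (id1 C (dom1 C (src2 C \<alpha>)))) = \<alpha> \<and>
        hcomp C (id2 C (id1 C (cod1 C (src2 C \<alpha>)))) \<alpha> = \<alpha>) \<and>
    (\<forall>\<alpha> \<in> Cell C. \<forall>\<beta> \<in> Cell C. \<forall>\<gamma> \<in> Cell C.
        cod1 C (src2 C \<alpha>) = dom1 C (src2 C \<beta>) \<longrightarrow> cod1 C (src2 C \<beta>) = dom1 C (src2 C \<gamma>) \<longrightarrow>
        hcomp C \<gamma> (hcomp C \<beta> \<alpha>) = hcomp C (hcomp C \<gamma> \<beta>) \<alpha>) \<and>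
    (\<forall>f \<in> Mor C. \<forall>g \<in> Mor C. cod1 C f = dom1 C g \<longrightarrow>
        hcomp C (id2 C g) (id2 C f) = id2 C (comp1 C g f)) \<and>
    \<comment> \<open>interchange law\<close>
    (\<forall>\<alpha> \<in> Cell C. \<forall>\<beta> \<in> Cell C. \<forall>\<gamma> \<in> Cell C. \<forall>\<delta> \<in> Cell C.
        tgt2 C \<alpha> = src2 C \<beta> \<longrightarrow> tgt2 C \<gamma> = src2 C \<delta> \<longrightarrow>
        cod1 C (src2 C \<alpha>) = dom1 C (src2 C \<gamma>) \<longrightarrow>
        hcomp C (vcomp C \<delta> \<gamma>) (vcomp C \<beta> \<alpha>) = vcomp C (hcomp C \<delta> \<beta>) (hcomp C \<gamma> \<alpha>))"

text \<open>Delta(A) is the (small) category with objects DOb A, morphisms DMor A,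
domain/codomain Ddom A / Dcod A, identities Did A and composition Dcomp A
(Dcomp A v u = v after u).  For a 1-morphism f, Fob f and Fmor f are the object
and morphism maps of the functor Delta_f; for a 2-morphism a, Ncomp a X is the
component Delta(a)_X.\<close>

record ('o,'m,'t,'x,'a) two_functor =
  DOb   :: "'o \<Rightarrow> 'x set"
  DMor  :: "'o \<Rightarrow> 'a set"
  Ddom  :: "'o \<Rightarrow> 'a \<Rightarrow> 'x"
  Dcod  :: "'o \<Rightarrow> 'a \<Rightarrow> 'x"
  Did   :: "'o \<Rightarrow> 'x \<Rightarrow> 'a"
  Dcomp :: "'o \<Rightarrow> 'a \<Rightarrow> 'a \<Rightarrow> 'a"
  Fob   :: "'m \<Rightarrow> 'x \<Rightarrow> 'x"
  Fmor  :: "'m \<Rightarrow> 'a \<Rightarrow> 'a"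
  Ncomp :: "'t \<Rightarrow> 'x \<Rightarrow> 'a"

definition Dhom :: "('o,'m,'t,'x,'a) two_functor \<Rightarrow> 'o \<Rightarrow> 'x \<Rightarrow> 'x \<Rightarrow> 'a set" where
  "Dhom D A X Y = {u \<in> DMor D A. Ddom D A u = X \<and> Dcod D A u = Y}"

definition is_category_at :: "('o,'m,'t,'x,'a) two_functor \<Rightarrow> 'o \<Rightarrow> bool" where
  "is_category_at D A \<longleftrightarrow>
    (\<forall>u \<in> DMor D A. Ddom D A u \<in> DOb D A \<and> Dcod D A u \<in> DOb D A) \<and>
    (\<forall>X \<in> DOb D A. Did D A X \<in> Dhom D A X X) \<and>
    (\<forall>u \<in> DMor D A. \<forall>v \<in> DMor D A. Dcod D A u = Ddom D A v \<longrightarrow>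
        Dcomp D A v u \<in> Dhom D A (Ddom D A u) (Dcod D A v)) \<and>
    (\<forall>u \<in> DMor D A. Dcomp D A u (Did D A (Ddom D A u)) = u \<and> Dcomp D A (Did D A (Dcod D A u)) u = u) \<and>
    (\<forall>u \<in> DMor D A. \<forall>v \<in> DMor D A. \<forall>w \<in> DMor D A.
        Dcod D A u = Ddom D A v \<longrightarrow> Dcod D A v = Ddom D A w \<longrightarrow>
        Dcomp D A w (Dcomp D A v u) = Dcomp D A (Dcomp D A w v) u)"

definition strict_two_functor_to_Cat ::
  "('o,'m,'t) two_cat \<Rightarrow> ('o,'m,'t,'x,'a) two_functor \<Rightarrow> bool" where
  "strict_two_functor_to_Cat C D \<longleftrightarrow>
    (\<forall>A \<in> Ob C. is_category_at D A) \<and>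
    \<comment> \<open>Delta_f is a functor Delta(A) -> Delta(B)\<close>
    (\<forall>f \<in> Mor C.
       (\<forall>X \<in> DOb D (dom1 C f). Fob D f X \<in> DOb D (cod1 C f)) \<and>
       (\<forall>u \<in> DMor D (dom1 C f). Fmor D f u \<in>
          Dhom D (cod1 C f) (Fob D f (Ddom D (dom1 C f) u)) (Fob D f (Dcod D (dom1 C f) u))) \<and>
       (\<forall>X \<in> DOb D (dom1 C f). Fmor D f (Did D (dom1 C f) X) = Did D (cod1 C f) (Fob D f X)) \<and>
       (\<forall>u \<in> DMor D (dom1 C f). \<forall>v \<in> DMor D (dom1 C f). Dcod D (dom1 C f) u = Ddom D (dom1 C f) v \<longrightarrow>
          Fmor D f (Dcomp D (dom1 C f) v u) = Dcomp D (cod1 C f) (Fmor D f v) (Fmor D f u))) \<and>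
    \<comment> \<open>Delta(alpha) is a natural transformation Delta_f => Delta_g\<close>
    (\<forall>\<alpha> \<in> Cell C. \<forall>X \<in> DOb D (dom1 C (src2 C \<alpha>)).
       Ncomp D \<alpha> X \<in> Dhom D (cod1 C (src2 C \<alpha>)) (Fob D (src2 C \<alpha>) X) (Fob D (tgt2 C \<alpha>) X)) \<and>
    (\<forall>\<alpha> \<in> Cell C. \<forall>u \<in> DMor D (dom1 C (src2 C \<alpha>)).
       Dcomp D (cod1 C (src2 C \<alpha>)) (Fmor D (tgt2 C \<alpha>) u) (Ncomp D \<alpha> (Ddom D (dom1 C (src2 C \<alpha>)) u))
       = Dcomp D (cod1 C (src2 C \<alpha>)) (Ncomp D \<alpha> (Dcod D (dom1 C (src2 C \<alpha>)) u)) (Fmor D (src2 C \<alpha>) u)) \<and>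
    \<comment> \<open>preservation of identity 1-morphisms and of composition of 1-morphisms\<close>
    (\<forall>A \<in> Ob C. (\<forall>X \<in> DOb D A. Fob D (id1 C A) X = X) \<and> (\<forall>u \<in> DMor D A. Fmor D (id1 C A) u = u)) \<and>
    (\<forall>f \<in> Mor C. \<forall>g \<in> Mor C. cod1 C f = dom1 C g \<longrightarrow>
       (\<forall>X \<in> DOb D (dom1 C f). Fob D (comp1 C g f) X = Fob D g (Fob D f X)) \<and>
       (\<forall>u \<in> DMor D (dom1 C f). Fmor D (comp1 C g f) u = Fmor D g (Fmor D f u))) \<and>
    \<comment> \<open>preservation of identity 2-morphisms\<close>
    (\<forall>f \<in> Mor C. \<forall>X \<in> DOb D (dom1 C f). Ncomp D (id2 C f) X = Did D (cod1 C f) (Fob D f X)) \<and>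
    \<comment> \<open>preservation of vertical composition\<close>
    (\<forall>\<alpha> \<in> Cell C. \<forall>\<beta> \<in> Cell C. tgt2 C \<alpha> = src2 C \<beta> \<longrightarrow>
       (\<forall>X \<in> DOb D (dom1 C (src2 C \<alpha>)).
          Ncomp D (vcomp C \<beta> \<alpha>) X = Dcomp D (cod1 C (src2 C \<alpha>)) (Ncomp D \<beta> X) (Ncomp D \<alpha> X))) \<and>
    \<comment> \<open>preservation of horizontal composition:
        alpha : f => g : A -> B, beta : h => k : B -> C'\<close>
    (\<forall>\<alpha> \<in> Cell C. \<forall>\<beta> \<in> Cell C. cod1 C (src2 C \<alpha>) = dom1 C (src2 C \<beta>) \<longrightarrow>
       (\<forall>X \<in> DOb D (dom1 C (src2 C \<alpha>)).
          Ncomp D (hcomp C \<beta> \<alpha>) X =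
            Dcomp D (cod1 C (src2 C \<beta>)) (Fmor D (tgt2 C \<beta>) (Ncomp D \<alpha> X))
                                         (Ncomp D \<beta> (Fob D (src2 C \<alpha>) X))))"

definition lawvere_weight :: "('o,'m,'t) two_cat \<Rightarrow> ('m \<Rightarrow> ereal) \<Rightarrow> bool" where
  "lawvere_weight C W \<longleftrightarrow>
    (\<forall>g \<in> Mor C. W g \<ge> 0) \<and>
    (\<forall>A \<in> Ob C. W (id1 C A) = 0) \<and>
    (\<forall>f \<in> Mor C. \<forall>g \<in> Mor C. cod1 C f = dom1 C g \<longrightarrow> W (comp1 C g f) \<le> W g + W f)"

text \<open>X in Delta(A), Y in Delta(B), g : B -> A, h : A -> B.\<close>

definition interleaved ::
  "('o,'m,'t) two_cat \<Rightarrow> ('o,'m,'t,'x,'a) two_functor \<Rightarrow> 'o \<Rightarrow> 'x \<Rightarrow> 'o \<Rightarrow> 'x \<Rightarrow> 'm \<Rightarrow> 'm \<Rightarrow> bool" where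
  "interleaved C D A X B Y g h \<longleftrightarrow>
    (\<exists>\<phi> \<psi> \<alpha> \<beta>.
       \<phi> \<in> Dhom D A X (Fob D g Y) \<and>
       \<psi> \<in> Dhom D B Y (Fob D h X) \<and>
       \<alpha> \<in> cell2 C (id1 C A) (comp1 C g h) \<and>
       \<beta> \<in> cell2 C (id1 C B) (comp1 C h g) \<and>
       Dcomp D A (Fmor D g \<psi>) \<phi> = Ncomp D \<alpha> X \<and>
       Dcomp D B (Fmor D h \<phi>) \<psi> = Ncomp D \<beta> Y)"

text \<open>Points of Im(Delta) are tagged by the object of C whose category they live in.\<close>

definition ImD :: "('o,'m,'t) two_cat \<Rightarrow> ('o,'m,'t,'x,'a) two_functor \<Rightarrow> ('o \<times> 'x) set" where
  "ImD C D = {(A, X). A \<in> Ob C \<and> X \<in> DOb D A}"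

definition interleaving_distance ::
  "('o,'m,'t) two_cat \<Rightarrow> ('o,'m,'t,'x,'a) two_functor \<Rightarrow> ('m \<Rightarrow> ereal) \<Rightarrow>
   ('o \<times> 'x) \<Rightarrow> ('o \<times> 'x) \<Rightarrow> ereal" where
  "interleaving_distance C D W P Q =
    (case P of (A, X) \<Rightarrow> case Q of (B, Y) \<Rightarrow>
      Inf {max (W g) (W h) | g h. g \<in> hom1 C B A \<and> h \<in> hom1 C A B \<and> interleaved C D A X B Y g h})"

definition extended_pseudometric :: "'p set \<Rightarrow> ('p \<Rightarrow> 'p \<Rightarrow> ereal) \<Rightarrow> bool" where
  "extended_pseudometric S d \<longleftrightarrow>
    (\<forall>x \<in> S. \<forall>y \<in> S. 0 \<le> d x y) \<and>
    (\<forall>x \<in> S. d x x = 0) \<and>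
    (\<forall>x \<in> S. \<forall>y \<in> S. d x y = d y x) \<and>
    (\<forall>x \<in> S. \<forall>y \<in> S. \<forall>z \<in> S. d x z \<le> d x y + d y z)"

end

(* An interleaving consists of two triangle conditions, one on each side. The identity
   interleaves an object with itself, swapping the two sides gives symmetry, and
   interleavings compose: from a (g1,h1)- and a (g2,h2)-interleaving, the morphisms
   \<Delta>_g1(\<phi>2) \<phi>1 and \<Delta>_h2(\<psi>1) \<psi>2 form a (g1 g2, h2 h1)-interleaving whose unit is
   \<alpha>1 followed by the whiskering g1 \<alpha>2 h1; the triangle condition comes from naturality
   of \<Delta>(\<alpha>2). A Lawvere weight vanishes on identities and is subadditive, so passing
   to infima gives the axioms of an extended pseudometric. *)

theory Submission
  imports Defs
begin

lemma ereal_le_Inf_add_Inf: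
  fixes x :: ereal
  assumes S: "\<And>a. a \<in> S \<Longrightarrow> 0 \<le> a" and T: "\<And>b. b \<in> T \<Longrightarrow> 0 \<le> b"
    and le: "\<And>a b. a \<in> S \<Longrightarrow> b \<in> T \<Longrightarrow> x \<le> a + b"
  shows "x \<le> Inf S + Inf T"
proof (cases "S = {} \<or> T = {}")
  case True
  have "0 \<le> Inf S" "0 \<le> Inf T" using S T by (auto intro: Inf_greatest)
  with True show ?thesis by (auto simp: top_ereal_def)
next
  case False
  then have "S \<noteq> {}" and "T \<noteq> {}" by auto
  have "x \<le> a + Inf T" if a: "a \<in> S" for a
  proof -
    have "x \<le> (INF b\<in>T. a + b)" using le[OF a] by (auto intro: INF_greatest)
    also have "\<dots> = a + Inf T"
      using INF_ereal_add_right[OF \<open>T \<noteq> {}\<close>, of a "\<lambda>b. b"] S[OF a] T by simp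
    finally show ?thesis .
  qed
  then have "x \<le> (INF a\<in>S. a + Inf T)" by (auto intro: INF_greatest)
  also have "\<dots> = Inf S + Inf T"
    using INF_ereal_add_left[OF \<open>S \<noteq> {}\<close>, of "Inf T" "\<lambda>a. a"] S T
    by (simp add: Inf_greatest)
  finally show ?thesis .
qed

lemma lawvere_weight_nonneg: "lawvere_weight C W \<Longrightarrow> f \<in> hom1 C A B \<Longrightarrow> 0 \<le> W f"
  unfolding lawvere_weight_def hom1_def by blast

lemma lawvere_weight_id1: "lawvere_weight C W \<Longrightarrow> A \<in> Ob C \<Longrightarrow> W (id1 C A) = 0"
  unfolding lawvere_weight_def by blast

lemma lawvere_weight_comp1:
  "lawvere_weight C W \<Longrightarrow> f \<in> hom1 C A B \<Longrightarrow> g \<in> hom1 C B E \<Longrightarrow> W (comp1 C g f) \<le> W g + W f"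
  unfolding lawvere_weight_def hom1_def by simp

(* The unit 1 \<Rightarrow> g h \<Rightarrow> g (g' h') h of a composite interleaving, built from the units
   \<alpha> : 1 \<Rightarrow> g h and \<beta> : 1 \<Rightarrow> g' h'. *)
definition unit_comp :: "('o,'m,'t) two_cat \<Rightarrow> 'm \<Rightarrow> 'm \<Rightarrow> 't \<Rightarrow> 't \<Rightarrow> 't" where
  "unit_comp C g h \<alpha> \<beta> = vcomp C (hcomp C (id2 C g) (hcomp C \<beta> (id2 C h))) \<alpha>"

locale two_category =
  fixes C :: "('o,'m,'t) two_cat"
  assumes strict: "strict_two_category C"
begin

lemma hom1_Ob: "f \<in> hom1 C A B \<Longrightarrow> A \<in> Ob C \<and> B \<in> Ob C"
  using strict unfolding strict_two_category_def hom1_def by (elim conjE) auto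

lemma id1_hom1: "A \<in> Ob C \<Longrightarrow> id1 C A \<in> hom1 C A A"
  using strict unfolding strict_two_category_def by (elim conjE) simp

lemma comp1_hom1:
  assumes "f \<in> hom1 C A B" and "g \<in> hom1 C B E"
  shows "comp1 C g f \<in> hom1 C A E"
  using assms hom1_Ob[OF assms(1)] hom1_Ob[OF assms(2)] strict
  unfolding strict_two_category_def by (elim conjE) blast

lemma comp1_id1_left: "f \<in> hom1 C A B \<Longrightarrow> comp1 C (id1 C B) f = f"
  using strict unfolding strict_two_category_def hom1_def by (elim conjE) auto

lemma comp1_assoc: "f \<in> hom1 C A B \<Longrightarrow> g \<in> hom1 C B E \<Longrightarrow> h \<in> hom1 C E F \<Longrightarrow>
    comp1 C h (comp1 C g f) = comp1 C (comp1 C h g) f"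
  using strict unfolding strict_two_category_def hom1_def by (elim conjE) auto

lemma id2_cell2: "f \<in> hom1 C A B \<Longrightarrow> id2 C f \<in> cell2 C f f"
  using strict unfolding strict_two_category_def hom1_def by (elim conjE) auto

lemma vcomp_cell2: "\<alpha> \<in> cell2 C f g \<Longrightarrow> \<beta> \<in> cell2 C g h \<Longrightarrow> vcomp C \<beta> \<alpha> \<in> cell2 C f h"
  using strict unfolding strict_two_category_def cell2_def by (elim conjE) auto

lemma hcomp_cell2: "\<alpha> \<in> cell2 C f g \<Longrightarrow> \<beta> \<in> cell2 C h k \<Longrightarrow> f \<in> hom1 C A B \<Longrightarrow> h \<in> hom1 C B E \<Longrightarrow>
    hcomp C \<beta> \<alpha> \<in> cell2 C (comp1 C h f) (comp1 C k g)"
  using strict unfolding strict_two_category_def cell2_def hom1_def by (elim conjE) auto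

lemma cell2_hom1: "\<alpha> \<in> cell2 C f g \<Longrightarrow> f \<in> hom1 C A B \<Longrightarrow> g \<in> hom1 C A B"
  using strict unfolding strict_two_category_def cell2_def hom1_def by (elim conjE) auto

lemma whisker_cell2:
  assumes \<alpha>: "\<alpha> \<in> cell2 C u v" and u: "u \<in> hom1 C B B'"
    and f: "f \<in> hom1 C A B" and g: "g \<in> hom1 C B' E"
  shows "hcomp C (id2 C g) (hcomp C \<alpha> (id2 C f))
    \<in> cell2 C (comp1 C g (comp1 C u f)) (comp1 C g (comp1 C v f))"
  using hcomp_cell2[OF hcomp_cell2[OF id2_cell2[OF f] \<alpha> f u] id2_cell2[OF g] comp1_hom1[OF f u] g] .

lemma whisker_unit_cell2:
  assumes \<beta>: "\<beta> \<in> cell2 C (id1 C B) k" and k: "k \<in> hom1 C B B"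
    and h: "h \<in> hom1 C A B" and g: "g \<in> hom1 C B A'"
  shows "hcomp C (id2 C g) (hcomp C \<beta> (id2 C h)) \<in> cell2 C (comp1 C g h) (comp1 C g (comp1 C k h))"
  using whisker_cell2[OF \<beta> id1_hom1 h g] comp1_id1_left[OF h] hom1_Ob[OF k] by simp

lemma unit_comp_cell2:
  assumes \<alpha>: "\<alpha> \<in> cell2 C (id1 C A) (comp1 C g h)" and \<beta>: "\<beta> \<in> cell2 C (id1 C B) (comp1 C g' h')"
    and g: "g \<in> hom1 C B A" and h: "h \<in> hom1 C A B"
    and g': "g' \<in> hom1 C E B" and h': "h' \<in> hom1 C B E"
  shows "unit_comp C g h \<alpha> \<beta> \<in> cell2 C (id1 C A) (comp1 C (comp1 C g g') (comp1 C h' h))"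
proof -
  have "comp1 C g (comp1 C (comp1 C g' h') h) = comp1 C (comp1 C g g') (comp1 C h' h)"
    using comp1_assoc[OF h h' g'] comp1_assoc[OF comp1_hom1[OF h h'] g' g] by simp
  then show ?thesis
    unfolding unit_comp_def
    using vcomp_cell2[OF \<alpha> whisker_unit_cell2[OF \<beta> comp1_hom1[OF h' g'] h g]] by simp
qed

end

locale two_functor_into_Cat = two_category C for C :: "('o,'m,'t) two_cat" +
  fixes D :: "('o,'m,'t,'x,'a) two_functor"
  assumes strict_functor: "strict_two_functor_to_Cat C D"
begin

lemma category_at_Ob: "A \<in> Ob C \<Longrightarrow> is_category_at D A"
  using strict_functor unfolding strict_two_functor_to_Cat_def by (elim conjE) simp

lemma Dhom_DOb: "A \<in> Ob C \<Longrightarrow> u \<in> Dhom D A P Q \<Longrightarrow> P \<in> DOb D A \<and> Q \<in> DOb D A"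
  using category_at_Ob[of A] unfolding is_category_at_def Dhom_def by auto

lemma Did_Dhom: "A \<in> Ob C \<Longrightarrow> P \<in> DOb D A \<Longrightarrow> Did D A P \<in> Dhom D A P P"
  using category_at_Ob[of A] unfolding is_category_at_def by auto

lemma Dcomp_Dhom: "A \<in> Ob C \<Longrightarrow> u \<in> Dhom D A P Q \<Longrightarrow> v \<in> Dhom D A Q R \<Longrightarrow>
    Dcomp D A v u \<in> Dhom D A P R"
  using category_at_Ob[of A] unfolding is_category_at_def Dhom_def by auto

lemma Dcomp_Did_left: "A \<in> Ob C \<Longrightarrow> u \<in> Dhom D A P Q \<Longrightarrow> Dcomp D A (Did D A Q) u = u"
  using category_at_Ob[of A] unfolding is_category_at_def Dhom_def by auto

lemma Dcomp_Did_right: "A \<in> Ob C \<Longrightarrow> u \<in> Dhom D A P Q \<Longrightarrow> Dcomp D A u (Did D A P) = u"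
  using category_at_Ob[of A] unfolding is_category_at_def Dhom_def by auto

lemma Dcomp_assoc: "A \<in> Ob C \<Longrightarrow> u \<in> Dhom D A P Q \<Longrightarrow> v \<in> Dhom D A Q R \<Longrightarrow> w \<in> Dhom D A R S \<Longrightarrow>
    Dcomp D A w (Dcomp D A v u) = Dcomp D A (Dcomp D A w v) u"
  using category_at_Ob[of A] unfolding is_category_at_def Dhom_def by auto

lemma Fob_DOb: "f \<in> hom1 C A B \<Longrightarrow> P \<in> DOb D A \<Longrightarrow> Fob D f P \<in> DOb D B"
  using strict_functor unfolding strict_two_functor_to_Cat_def hom1_def by (elim conjE) auto

lemma Fmor_Dhom: "f \<in> hom1 C A B \<Longrightarrow> u \<in> Dhom D A P Q \<Longrightarrow>
    Fmor D f u \<in> Dhom D B (Fob D f P) (Fob D f Q)"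
  using strict_functor unfolding strict_two_functor_to_Cat_def hom1_def Dhom_def by (elim conjE) auto

lemma Fmor_Did: "f \<in> hom1 C A B \<Longrightarrow> P \<in> DOb D A \<Longrightarrow> Fmor D f (Did D A P) = Did D B (Fob D f P)"
  using strict_functor unfolding strict_two_functor_to_Cat_def hom1_def by (elim conjE) auto

lemma Fmor_Dcomp: "f \<in> hom1 C A B \<Longrightarrow> u \<in> Dhom D A P Q \<Longrightarrow> v \<in> Dhom D A Q R \<Longrightarrow>
    Fmor D f (Dcomp D A v u) = Dcomp D B (Fmor D f v) (Fmor D f u)"
  using strict_functor unfolding strict_two_functor_to_Cat_def hom1_def Dhom_def by (elim conjE) auto

lemma Ncomp_Dhom: "\<alpha> \<in> cell2 C f g \<Longrightarrow> f \<in> hom1 C A B \<Longrightarrow> P \<in> DOb D A \<Longrightarrow>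
    Ncomp D \<alpha> P \<in> Dhom D B (Fob D f P) (Fob D g P)"
  using strict_functor unfolding strict_two_functor_to_Cat_def hom1_def cell2_def by (elim conjE) auto

lemma Ncomp_natural: "\<alpha> \<in> cell2 C f g \<Longrightarrow> f \<in> hom1 C A B \<Longrightarrow> u \<in> Dhom D A P Q \<Longrightarrow>
    Dcomp D B (Fmor D g u) (Ncomp D \<alpha> P) = Dcomp D B (Ncomp D \<alpha> Q) (Fmor D f u)"
  using strict_functor unfolding strict_two_functor_to_Cat_def hom1_def cell2_def Dhom_def by (elim conjE) auto

lemma Fob_id1: "A \<in> Ob C \<Longrightarrow> P \<in> DOb D A \<Longrightarrow> Fob D (id1 C A) P = P"
  using strict_functor unfolding strict_two_functor_to_Cat_def by (elim conjE) auto

lemma Fmor_id1: "A \<in> Ob C \<Longrightarrow> u \<in> Dhom D A P Q \<Longrightarrow> Fmor D (id1 C A) u = u"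
  using strict_functor unfolding strict_two_functor_to_Cat_def Dhom_def by (elim conjE) auto

lemma Fob_comp1: "f \<in> hom1 C A B \<Longrightarrow> g \<in> hom1 C B E \<Longrightarrow> P \<in> DOb D A \<Longrightarrow>
    Fob D (comp1 C g f) P = Fob D g (Fob D f P)"
  using strict_functor unfolding strict_two_functor_to_Cat_def hom1_def by (elim conjE) auto

lemma Fmor_comp1: "f \<in> hom1 C A B \<Longrightarrow> g \<in> hom1 C B E \<Longrightarrow> u \<in> Dhom D A P Q \<Longrightarrow>
    Fmor D (comp1 C g f) u = Fmor D g (Fmor D f u)"
  using strict_functor unfolding strict_two_functor_to_Cat_def hom1_def Dhom_def by (elim conjE) auto

lemma Ncomp_id2: "f \<in> hom1 C A B \<Longrightarrow> P \<in> DOb D A \<Longrightarrow> Ncomp D (id2 C f) P = Did D B (Fob D f P)"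
  using strict_functor unfolding strict_two_functor_to_Cat_def hom1_def by (elim conjE) auto

lemma Ncomp_vcomp: "\<alpha> \<in> cell2 C f g \<Longrightarrow> \<beta> \<in> cell2 C g h \<Longrightarrow> f \<in> hom1 C A B \<Longrightarrow> P \<in> DOb D A \<Longrightarrow>
    Ncomp D (vcomp C \<beta> \<alpha>) P = Dcomp D B (Ncomp D \<beta> P) (Ncomp D \<alpha> P)"
  using strict_functor unfolding strict_two_functor_to_Cat_def hom1_def cell2_def by (elim conjE) auto

lemma Ncomp_hcomp: "\<alpha> \<in> cell2 C f g \<Longrightarrow> \<beta> \<in> cell2 C h k \<Longrightarrow> f \<in> hom1 C A B \<Longrightarrow> h \<in> hom1 C B E \<Longrightarrow>
    P \<in> DOb D A \<Longrightarrow>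
    Ncomp D (hcomp C \<beta> \<alpha>) P = Dcomp D E (Fmor D k (Ncomp D \<alpha> P)) (Ncomp D \<beta> (Fob D f P))"
  using strict_functor unfolding strict_two_functor_to_Cat_def hom1_def cell2_def by (elim conjE) auto



lemma Ncomp_whisker_left:
  assumes \<alpha>: "\<alpha> \<in> cell2 C f k" and f: "f \<in> hom1 C A B" and g: "g \<in> hom1 C B E"
    and X: "X \<in> DOb D A"
  shows "Ncomp D (hcomp C (id2 C g) \<alpha>) X = Fmor D g (Ncomp D \<alpha> X)"
proof -
  have E: "E \<in> Ob C" using hom1_Ob[OF g] by blast
  have "Ncomp D (hcomp C (id2 C g) \<alpha>) X
      = Dcomp D E (Fmor D g (Ncomp D \<alpha> X)) (Ncomp D (id2 C g) (Fob D f X))"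
    using Ncomp_hcomp[OF \<alpha> id2_cell2[OF g] f g X] .
  also have "\<dots> = Dcomp D E (Fmor D g (Ncomp D \<alpha> X)) (Did D E (Fob D g (Fob D f X)))"
    using Ncomp_id2[OF g Fob_DOb[OF f X]] by simp
  also have "\<dots> = Fmor D g (Ncomp D \<alpha> X)"
    using Dcomp_Did_right[OF E Fmor_Dhom[OF g Ncomp_Dhom[OF \<alpha> f X]]] .
  finally show ?thesis .
qed

lemma Ncomp_whisker_right:
  assumes \<alpha>: "\<alpha> \<in> cell2 C g k" and f: "f \<in> hom1 C A B" and g: "g \<in> hom1 C B E"
    and X: "X \<in> DOb D A"
  shows "Ncomp D (hcomp C \<alpha> (id2 C f)) X = Ncomp D \<alpha> (Fob D f X)"
proof -
  have E: "E \<in> Ob C" using hom1_Ob[OF g] by blast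
  have fX: "Fob D f X \<in> DOb D B" using Fob_DOb[OF f X] .
  have "Ncomp D (hcomp C \<alpha> (id2 C f)) X
      = Dcomp D E (Fmor D k (Ncomp D (id2 C f) X)) (Ncomp D \<alpha> (Fob D f X))"
    using Ncomp_hcomp[OF id2_cell2[OF f] \<alpha> f g X] .
  also have "\<dots> = Dcomp D E (Did D E (Fob D k (Fob D f X))) (Ncomp D \<alpha> (Fob D f X))"
    using Ncomp_id2[OF f X] Fmor_Did[OF cell2_hom1[OF \<alpha> g] fX] by simp
  also have "\<dots> = Ncomp D \<alpha> (Fob D f X)"
    using Dcomp_Did_left[OF E Ncomp_Dhom[OF \<alpha> g fX]] .
  finally show ?thesis .
qed

lemma Ncomp_whisker:
  assumes \<alpha>: "\<alpha> \<in> cell2 C u v" and u: "u \<in> hom1 C B B'"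
    and f: "f \<in> hom1 C A B" and g: "g \<in> hom1 C B' E" and X: "X \<in> DOb D A"
  shows "Ncomp D (hcomp C (id2 C g) (hcomp C \<alpha> (id2 C f))) X = Fmor D g (Ncomp D \<alpha> (Fob D f X))"
  using Ncomp_whisker_left[OF hcomp_cell2[OF id2_cell2[OF f] \<alpha> f u] comp1_hom1[OF f u] g X]
    Ncomp_whisker_right[OF \<alpha> f u X] by simp

lemma Ncomp_unit_comp:
  assumes \<alpha>: "\<alpha> \<in> cell2 C (id1 C A) (comp1 C g h)" and \<beta>: "\<beta> \<in> cell2 C (id1 C B) k"
    and k: "k \<in> hom1 C B B" and g: "g \<in> hom1 C B A" and h: "h \<in> hom1 C A B"
    and X: "X \<in> DOb D A"
  shows "Ncomp D (unit_comp C g h \<alpha> \<beta>) X = Dcomp D A (Fmor D g (Ncomp D \<beta> (Fob D h X))) (Ncomp D \<alpha> X)"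
  using Ncomp_vcomp[OF \<alpha> whisker_unit_cell2[OF \<beta> k h g] id1_hom1 X]
    Ncomp_whisker[OF \<beta> id1_hom1 h g X] hom1_Ob[OF h]
  unfolding unit_comp_def by simp

end

definition half_interleaving ::
  "('o,'m,'t) two_cat \<Rightarrow> ('o,'m,'t,'x,'a) two_functor \<Rightarrow> 'o \<Rightarrow> 'x \<Rightarrow> 'o \<Rightarrow> 'x \<Rightarrow> 'm \<Rightarrow> 'm \<Rightarrow>
   't \<Rightarrow> 'a \<Rightarrow> 'a \<Rightarrow> bool" where
  "half_interleaving C D A X B Y g h \<alpha> \<phi> \<psi> \<longleftrightarrow>
     \<phi> \<in> Dhom D A X (Fob D g Y) \<and> \<psi> \<in> Dhom D B Y (Fob D h X) \<and>
     \<alpha> \<in> cell2 C (id1 C A) (comp1 C g h) \<and> Dcomp D A (Fmor D g \<psi>) \<phi> = Ncomp D \<alpha> X"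

lemma interleaved_iff_half_interleavings:
  "interleaved C D A X B Y g h \<longleftrightarrow>
    (\<exists>\<phi> \<psi> \<alpha> \<beta>. half_interleaving C D A X B Y g h \<alpha> \<phi> \<psi> \<and> half_interleaving C D B Y A X h g \<beta> \<psi> \<phi>)"
  unfolding interleaved_def half_interleaving_def by blast

lemma interleaved_sym: "interleaved C D A X B Y g h \<Longrightarrow> interleaved C D B Y A X h g"
  unfolding interleaved_def by blast

context two_functor_into_Cat
begin

lemma interleaved_refl:
  assumes A: "A \<in> Ob C" and X: "X \<in> DOb D A"
  shows "interleaved C D A X A X (id1 C A) (id1 C A)"
proof -
  have idA: "id1 C A \<in> hom1 C A A" using id1_hom1[OF A] .
  have "Did D A X \<in> Dhom D A X (Fob D (id1 C A) X)"
    using Did_Dhom[OF A X] Fob_id1[OF A X] by simp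
  moreover have "id2 C (id1 C A) \<in> cell2 C (id1 C A) (comp1 C (id1 C A) (id1 C A))"
    using id2_cell2[OF idA] comp1_id1_left[OF idA] by simp
  moreover have "Dcomp D A (Fmor D (id1 C A) (Did D A X)) (Did D A X) = Ncomp D (id2 C (id1 C A)) X"
    using Fmor_id1[OF A Did_Dhom[OF A X]] Dcomp_Did_left[OF A Did_Dhom[OF A X]]
      Ncomp_id2[OF idA X] Fob_id1[OF A X] by simp
  ultimately show ?thesis unfolding interleaved_def by blast
qed

lemma half_interleaving_naturality:
  assumes half: "half_interleaving C D B Y E Z g h \<alpha> \<phi> \<psi>"
    and g: "g \<in> hom1 C E B" and h: "h \<in> hom1 C B E" and \<chi>: "\<chi> \<in> Dhom D B Y Y'"
  shows "Dcomp D B (Fmor D g (Dcomp D E (Fmor D h \<chi>) \<psi>)) \<phi> = Dcomp D B (Ncomp D \<alpha> Y') \<chi>"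
proof -
  have B: "B \<in> Ob C" and E: "E \<in> Ob C" using hom1_Ob[OF g] by blast+
  have \<phi>: "\<phi> \<in> Dhom D B Y (Fob D g Z)" and \<psi>: "\<psi> \<in> Dhom D E Z (Fob D h Y)"
    and \<alpha>: "\<alpha> \<in> cell2 C (id1 C B) (comp1 C g h)" and triangle: "Dcomp D B (Fmor D g \<psi>) \<phi> = Ncomp D \<alpha> Y"
    using half unfolding half_interleaving_def by blast+
  have h\<chi>: "Fmor D h \<chi> \<in> Dhom D E (Fob D h Y) (Fob D h Y')" using Fmor_Dhom[OF h \<chi>] .
  have "Dcomp D B (Fmor D g (Dcomp D E (Fmor D h \<chi>) \<psi>)) \<phi>
      = Dcomp D B (Dcomp D B (Fmor D g (Fmor D h \<chi>)) (Fmor D g \<psi>)) \<phi>"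
    using Fmor_Dcomp[OF g \<psi> h\<chi>] by simp
  also have "\<dots> = Dcomp D B (Fmor D g (Fmor D h \<chi>)) (Dcomp D B (Fmor D g \<psi>) \<phi>)"
    using Dcomp_assoc[OF B \<phi> Fmor_Dhom[OF g \<psi>] Fmor_Dhom[OF g h\<chi>]] by simp
  also have "\<dots> = Dcomp D B (Fmor D (comp1 C g h) \<chi>) (Ncomp D \<alpha> Y)"
    using triangle Fmor_comp1[OF h g \<chi>] by simp
  also have "\<dots> = Dcomp D B (Ncomp D \<alpha> Y') (Fmor D (id1 C B) \<chi>)"
    using Ncomp_natural[OF \<alpha> id1_hom1[OF B] \<chi>] .
  also have "\<dots> = Dcomp D B (Ncomp D \<alpha> Y') \<chi>"
    using Fmor_id1[OF B \<chi>] by simp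
  finally show ?thesis .
qed

lemma half_interleaving_comp:
  assumes half1: "half_interleaving C D A X B Y g1 h1 \<alpha>1 \<phi>1 \<psi>1"
    and half2: "half_interleaving C D B Y E Z g2 h2 \<alpha>2 \<phi>2 \<psi>2"
    and g1: "g1 \<in> hom1 C B A" and h1: "h1 \<in> hom1 C A B"
    and g2: "g2 \<in> hom1 C E B" and h2: "h2 \<in> hom1 C B E"
  shows "half_interleaving C D A X E Z (comp1 C g1 g2) (comp1 C h2 h1) (unit_comp C g1 h1 \<alpha>1 \<alpha>2)
           (Dcomp D A (Fmor D g1 \<phi>2) \<phi>1) (Dcomp D E (Fmor D h2 \<psi>1) \<psi>2)"
proof -
  let ?\<phi> = "Dcomp D A (Fmor D g1 \<phi>2) \<phi>1" and ?\<psi> = "Dcomp D E (Fmor D h2 \<psi>1) \<psi>2"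
  have A: "A \<in> Ob C" and B: "B \<in> Ob C" and E: "E \<in> Ob C"
    using hom1_Ob g1 g2 by blast+
  have \<phi>1: "\<phi>1 \<in> Dhom D A X (Fob D g1 Y)" and \<psi>1: "\<psi>1 \<in> Dhom D B Y (Fob D h1 X)"
    and \<alpha>1: "\<alpha>1 \<in> cell2 C (id1 C A) (comp1 C g1 h1)"
    and triangle1: "Dcomp D A (Fmor D g1 \<psi>1) \<phi>1 = Ncomp D \<alpha>1 X"
    using half1 unfolding half_interleaving_def by blast+
  have \<phi>2: "\<phi>2 \<in> Dhom D B Y (Fob D g2 Z)" and \<psi>2: "\<psi>2 \<in> Dhom D E Z (Fob D h2 Y)"
    and \<alpha>2: "\<alpha>2 \<in> cell2 C (id1 C B) (comp1 C g2 h2)"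
    using half2 unfolding half_interleaving_def by blast+
  have X: "X \<in> DOb D A" and Z: "Z \<in> DOb D E"
    using Dhom_DOb[OF A \<phi>1] Dhom_DOb[OF E \<psi>2] by blast+
  have hX: "Fob D h1 X \<in> DOb D B" using Fob_DOb[OF h1 X] .
  have \<phi>: "?\<phi> \<in> Dhom D A X (Fob D (comp1 C g1 g2) Z)"
    using Dcomp_Dhom[OF A \<phi>1 Fmor_Dhom[OF g1 \<phi>2]] Fob_comp1[OF g2 g1 Z] by simp
  have \<psi>: "?\<psi> \<in> Dhom D E Z (Fob D (comp1 C h2 h1) X)"
    using Dcomp_Dhom[OF E \<psi>2 Fmor_Dhom[OF h2 \<psi>1]] Fob_comp1[OF h1 h2 X] by simp
  have \<alpha>2hX: "Ncomp D \<alpha>2 (Fob D h1 X) \<in> Dhom D B (Fob D h1 X) (Fob D (comp1 C g2 h2) (Fob D h1 X))"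
    using Ncomp_Dhom[OF \<alpha>2 id1_hom1[OF B] hX] Fob_id1[OF B hX] by simp
  have "Dcomp D A (Fmor D (comp1 C g1 g2) ?\<psi>) ?\<phi> = Dcomp D A (Fmor D g1 (Fmor D g2 ?\<psi>)) ?\<phi>"
    using Fmor_comp1[OF g2 g1 \<psi>] by simp
  also have "\<dots> = Dcomp D A (Dcomp D A (Fmor D g1 (Fmor D g2 ?\<psi>)) (Fmor D g1 \<phi>2)) \<phi>1"
    using Dcomp_assoc[OF A \<phi>1 Fmor_Dhom[OF g1 \<phi>2] Fmor_Dhom[OF g1 Fmor_Dhom[OF g2 \<psi>]]] by simp
  also have "\<dots> = Dcomp D A (Fmor D g1 (Dcomp D B (Fmor D g2 ?\<psi>) \<phi>2)) \<phi>1"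
    using Fmor_Dcomp[OF g1 \<phi>2 Fmor_Dhom[OF g2 \<psi>]] by simp
  also have "\<dots> = Dcomp D A (Fmor D g1 (Dcomp D B (Ncomp D \<alpha>2 (Fob D h1 X)) \<psi>1)) \<phi>1"
    using half_interleaving_naturality[OF half2 g2 h2 \<psi>1] by simp
  also have "\<dots> = Dcomp D A (Fmor D g1 (Ncomp D \<alpha>2 (Fob D h1 X))) (Dcomp D A (Fmor D g1 \<psi>1) \<phi>1)"
    using Fmor_Dcomp[OF g1 \<psi>1 \<alpha>2hX] Dcomp_assoc[OF A \<phi>1 Fmor_Dhom[OF g1 \<psi>1] Fmor_Dhom[OF g1 \<alpha>2hX]]
    by simp
  also have "\<dots> = Ncomp D (unit_comp C g1 h1 \<alpha>1 \<alpha>2) X"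
    using triangle1 Ncomp_unit_comp[OF \<alpha>1 \<alpha>2 comp1_hom1[OF h2 g2] g1 h1 X] by simp
  finally show ?thesis
    unfolding half_interleaving_def using \<phi> \<psi> unit_comp_cell2[OF \<alpha>1 \<alpha>2 g1 h1 g2 h2] by blast
qed

lemma interleaved_comp:
  assumes "interleaved C D A X B Y g1 h1" and "interleaved C D B Y E Z g2 h2"
    and "g1 \<in> hom1 C B A" and "h1 \<in> hom1 C A B" and "g2 \<in> hom1 C E B" and "h2 \<in> hom1 C B E"
  shows "interleaved C D A X E Z (comp1 C g1 g2) (comp1 C h2 h1)"
  using assms half_interleaving_comp unfolding interleaved_iff_half_interleavings by metis

end

lemma interleaving_distance_le:
  "interleaved C D A X B Y g h \<Longrightarrow> g \<in> hom1 C B A \<Longrightarrow> h \<in> hom1 C A B \<Longrightarrow>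
    interleaving_distance C D W (A, X) (B, Y) \<le> max (W g) (W h)"
  unfolding interleaving_distance_def prod.case by (rule Inf_lower) blast

lemma interleaving_distance_nonneg:
  "lawvere_weight C W \<Longrightarrow> 0 \<le> interleaving_distance C D W (A, X) (B, Y)"
  using lawvere_weight_nonneg[of C W] unfolding interleaving_distance_def
  by (fastforce intro!: Inf_greatest simp: le_max_iff_disj)

lemma interleaving_distance_sym:
  "interleaving_distance C D W (A, X) (B, Y) = interleaving_distance C D W (B, Y) (A, X)"
proof -
  have "{max (W g) (W h) |g h. g \<in> hom1 C B A \<and> h \<in> hom1 C A B \<and> interleaved C D A X B Y g h}
      = {max (W g) (W h) |g h. g \<in> hom1 C A B \<and> h \<in> hom1 C B A \<and> interleaved C D B Y A X g h}"
    by (blast intro: interleaved_sym max.commute)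
  then show ?thesis unfolding interleaving_distance_def by simp
qed

context two_functor_into_Cat
begin

lemma interleaving_distance_self:
  assumes W: "lawvere_weight C W" and A: "A \<in> Ob C" and X: "X \<in> DOb D A"
  shows "interleaving_distance C D W (A, X) (A, X) = 0"
proof (rule antisym)
  have "interleaving_distance C D W (A, X) (A, X) \<le> max (W (id1 C A)) (W (id1 C A))"
    using interleaving_distance_le[OF interleaved_refl[OF A X] id1_hom1[OF A] id1_hom1[OF A]] .
  then show "interleaving_distance C D W (A, X) (A, X) \<le> 0"
    using lawvere_weight_id1[OF W A] by simp
qed (rule interleaving_distance_nonneg[OF W])

lemma interleaving_distance_le_add:
  assumes W: "lawvere_weight C W"
    and "interleaved C D A X B Y g1 h1" and "interleaved C D B Y E Z g2 h2"
    and g1: "g1 \<in> hom1 C B A" and h1: "h1 \<in> hom1 C A B"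
    and g2: "g2 \<in> hom1 C E B" and h2: "h2 \<in> hom1 C B E"
  shows "interleaving_distance C D W (A, X) (E, Z) \<le> max (W g1) (W h1) + max (W g2) (W h2)"
proof -
  have "interleaving_distance C D W (A, X) (E, Z) \<le> max (W (comp1 C g1 g2)) (W (comp1 C h2 h1))"
    using interleaving_distance_le[OF interleaved_comp[OF assms(2-7)]
        comp1_hom1[OF g2 g1] comp1_hom1[OF h1 h2]] .
  also have "\<dots> \<le> max (W g1 + W g2) (W h1 + W h2)"
    using lawvere_weight_comp1[OF W g2 g1] lawvere_weight_comp1[OF W h1 h2]
    by (intro max.mono) (simp_all add: add.commute)
  also have "\<dots> \<le> max (W g1) (W h1) + max (W g2) (W h2)"
    by (simp add: add_mono)
  finally show ?thesis .
qed

lemma interleaving_distance_triangle: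
  assumes W: "lawvere_weight C W"
  shows "interleaving_distance C D W (A, X) (E, Z)
    \<le> interleaving_distance C D W (A, X) (B, Y) + interleaving_distance C D W (B, Y) (E, Z)"
  using interleaving_distance_le_add[OF W] lawvere_weight_nonneg[OF W]
  unfolding interleaving_distance_def prod.case
  by (intro ereal_le_Inf_add_Inf) (auto simp: le_max_iff_disj)

end

theorem theorem3p16:
  fixes C :: "('o,'m,'t) two_cat"
    and D :: "('o,'m,'t,'x,'a) two_functor"
    and W :: "'m \<Rightarrow> ereal"
  assumes "strict_two_category C"
    and "strict_two_functor_to_Cat C D"
    and "lawvere_weight C W"
  shows "extended_pseudometric (ImD C D) (interleaving_distance C D W)"
proof -
  interpret two_functor_into_Cat C D
    using assms(1,2) by unfold_locales
  show ?thesis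
    unfolding extended_pseudometric_def ImD_def
    using assms(3) interleaving_distance_nonneg interleaving_distance_sym
      interleaving_distance_self interleaving_distance_triangle
    by auto
qed

end
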